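(* Let $\mathcal H$ be a separable complex Hilbert space, $A\in L(\mathcal H)^+$ and $T\in L(\mathcal H)$. If $T$ is an $A$-idempotent then $I-T$ is an $A$-idempotent; and if $T$ is an $A$-projection then $I-T$ is an $A$-projection.
   Context: $L(\mathcal H)^+$ denotes the positive (semidefinite) bounded operators. For $A\in L(\mathcal H)^+$, $\|x\|_A=\langle Ax,x\rangle^{1/2}$. $T\in L(\mathcal H)$ is an $A$-idempotent if $AT^2=AT$. $T$ is an $A$-projection if $\|y-Ty\|_A\le\|y-s\|_A$ for all $y\in\mathcal H$ and all $s\in\overline{R(T)}$ (i.e. $T$ is an $A$-projection into the closure of its range). *)

theory Defs
  imports "HOL-Analysis.Analysis"
begin

text \<open>HOL-Analysis only has real inner product spaces.\<close>

class complex_inner = real_normed_vector +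
  fixes scaleC :: "complex \<Rightarrow> 'a \<Rightarrow> 'a"
    and cinner :: "'a \<Rightarrow> 'a \<Rightarrow> complex"
  assumes scaleC_add_right: "scaleC a (x + y) = scaleC a x + scaleC a y"
    and scaleC_add_left: "scaleC (a + b) x = scaleC a x + scaleC b x"
    and scaleC_scaleC: "scaleC a (scaleC b x) = scaleC (a * b) x"
    and scaleC_one: "scaleC 1 x = x"
    and scaleR_scaleC: "scaleR r x = scaleC (complex_of_real r) x"
    and cinner_add_left: "cinner (x + y) z = cinner x z + cinner y z"
    and cinner_scaleC_left: "cinner (scaleC a x) y = a * cinner x y"
    and cinner_commute: "cinner y x = cnj (cinner x y)"
    and cinner_ge_zero: "0 \<le> Re (cinner x x)"
    and cinner_eq_zero_iff: "cinner x x = 0 \<longleftrightarrow> x = 0"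
    and norm_eq_sqrt_cinner: "norm x = sqrt (Re (cinner x x))"

class complex_hilbert = complex_inner + complete_space

definition bounded_clinear :: "('a::complex_inner \<Rightarrow> 'a) \<Rightarrow> bool" where
  "bounded_clinear T \<longleftrightarrow>
     (\<forall>x y. T (x + y) = T x + T y) \<and>
     (\<forall>c x. T (scaleC c x) = scaleC c (T x)) \<and>
     (\<exists>K. \<forall>x. norm (T x) \<le> norm x * K)"

definition positive_op :: "('a::complex_inner \<Rightarrow> 'a) \<Rightarrow> bool" where
  "positive_op A \<longleftrightarrow> bounded_clinear A \<and>
     (\<forall>x. Im (cinner (A x) x) = 0 \<and> 0 \<le> Re (cinner (A x) x))"

definition anorm :: "('a::complex_inner \<Rightarrow> 'a) \<Rightarrow> 'a \<Rightarrow> real" where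
  "anorm A x = sqrt (Re (cinner (A x) x))"

definition A_idempotent :: "('a \<Rightarrow> 'a) \<Rightarrow> ('a \<Rightarrow> 'a) \<Rightarrow> bool" where
  "A_idempotent A T \<longleftrightarrow> A \<circ> (T \<circ> T) = A \<circ> T"

definition A_projection :: "('a::complex_inner \<Rightarrow> 'a) \<Rightarrow> ('a \<Rightarrow> 'a) \<Rightarrow> bool" where
  "A_projection A T \<longleftrightarrow>
     (\<forall>y. \<forall>s \<in> closure (range T). anorm A (y - T y) \<le> anorm A (y - s))"

end

theory Submission
  imports Defs
begin

text \<open>The A-idempotent part is pure linearity. For an A-projection \<open>T\<close> the point is
that \<open>y - T y\<close> is A-orthogonal to the range of \<open>T\<close>: minimality of \<open>\<parallel>y - T y + \<lambda> T w\<parallel>_A\<close> over all \<open>\<lambda>\<close> forces \<open><A(y - T y), T w> = 0\<close>.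
Then for \<open>s = z - T z\<close> one has \<open>y - s = T y + v\<close> with \<open>v = (I - T)(y - z)\<close>
A-orthogonal to \<open>T y\<close>, so \<open>\<parallel>y - s\<parallel>_A\<^sup>2 = \<parallel>T y\<parallel>_A\<^sup>2 + \<parallel>v\<parallel>_A\<^sup>2 \<ge> \<parallel>y - (I - T) y\<parallel>_A\<^sup>2\<close>,
and continuity of the A-seminorm extends this to the closure of the range of \<open>I - T\<close>.\<close>

context complex_inner
begin

lemma cinner_add_right: "cinner x (y + z) = cinner x y + cinner x z"
  by (metis cinner_commute cinner_add_left complex_cnj_add)

lemma cinner_scaleC_right: "cinner x (scaleC a y) = cnj a * cinner x y"
  by (metis cinner_commute cinner_scaleC_left complex_cnj_mult complex_cnj_cnj)

lemma power2_norm_eq_Re_cinner: "(norm x)\<^sup>2 = Re (cinner x x)"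
  using norm_eq_sqrt_cinner[of x] cinner_ge_zero[of x] by simp

lemma Re_cinner_polarization:
  "Re (cinner x y) = ((norm (x + y))\<^sup>2 - (norm x)\<^sup>2 - (norm y)\<^sup>2) / 2"
proof -
  have "cinner (x + y) (x + y) = cinner x x + cinner x y + cinner y x + cinner y y"
    by (simp add: cinner_add_left cinner_add_right)
  moreover have "Re (cinner y x) = Re (cinner x y)"
    by (subst cinner_commute) simp
  ultimately show ?thesis
    by (simp add: power2_norm_eq_Re_cinner)
qed

end

lemma bounded_clinear_scaleC:
  "bounded_clinear T \<Longrightarrow> T (scaleC c x) = scaleC c (T x)"
  unfolding bounded_clinear_def by blast

lemma bounded_clinear_imp_bounded_linear:
  assumes "bounded_clinear T"
  shows "bounded_linear T"
proof -
  from assms obtain K where K: "\<And>x. norm (T x) \<le> norm x * K"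
    unfolding bounded_clinear_def by blast
  show ?thesis
  proof (rule bounded_linear_intro)
    show "T (x + y) = T x + T y" for x y
      using assms unfolding bounded_clinear_def by blast
    show "T (r *\<^sub>R x) = r *\<^sub>R T x" for r x
      by (simp add: scaleR_scaleC bounded_clinear_scaleC[OF assms])
  qed (rule K)
qed

lemma bounded_clinear_imp_linear: "bounded_clinear T \<Longrightarrow> linear T"
  by (simp add: bounded_clinear_imp_bounded_linear bounded_linear.linear)

lemma positive_op_bounded_clinear: "positive_op A \<Longrightarrow> bounded_clinear A"
  by (simp add: positive_op_def)

lemma positive_op_Re_cinner_nonneg: "positive_op A \<Longrightarrow> 0 \<le> Re (cinner (A x) x)"
  by (simp add: positive_op_def)

text \<open>A real quadratic form forces the sesquilinear form to be Hermitian: compare the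
imaginary parts of the form at \<open>x + y\<close> and at \<open>x + \<i> y\<close>.\<close>

lemma positive_op_cinner_commute:
  assumes "positive_op A"
  shows "cinner (A y) x = cnj (cinner (A x) y)"
proof -
  have lin: "linear A"
    using assms by (simp add: positive_op_def bounded_clinear_imp_linear)
  have scA: "A (scaleC c u) = scaleC c (A u)" for c u
    using assms by (simp add: positive_op_def bounded_clinear_scaleC)
  have im: "Im (cinner (A u) u) = 0" for u
    using assms unfolding positive_op_def by blast
  define p q where "p = cinner (A x) y" and "q = cinner (A y) x"
  have "cinner (A (x + y)) (x + y) = cinner (A x) x + p + q + cinner (A y) y"
    by (simp add: linear_add[OF lin] cinner_add_left cinner_add_right p_def q_def)
  then have "Im (p + q) = 0"
    using im[of "x + y"] im[of x] im[of y] by simp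
  moreover have "cinner (A (x + scaleC \<i> y)) (x + scaleC \<i> y)
      = cinner (A x) x - \<i> * p + \<i> * q + cinner (A y) y"
    by (simp add: linear_add[OF lin] scA cinner_add_left cinner_add_right
        cinner_scaleC_left cinner_scaleC_right p_def q_def algebra_simps)
  then have "Re (q - p) = 0"
    using im[of "x + scaleC \<i> y"] im[of x] im[of y] by simp
  ultimately have "q = cnj p"
    by (simp add: complex_eq_iff)
  then show ?thesis
    by (simp add: p_def q_def)
qed

lemma positive_op_cinner_add:
  assumes "positive_op A"
  shows "cinner (A (u + v)) (u + v)
    = cinner (A u) u + cinner (A u) v + cnj (cinner (A u) v) + cinner (A v) v"
  using positive_op_cinner_commute[OF assms, of v u]
    linear_add[OF bounded_clinear_imp_linear[OF positive_op_bounded_clinear[OF assms]]]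
  by (simp add: cinner_add_left cinner_add_right)

lemma continuous_on_Re_cinner_self:
  assumes "bounded_linear A"
  shows "continuous_on UNIV (\<lambda>u. Re (cinner (A u) u))"
proof -
  have "continuous_on UNIV A"
    using assms linear_continuous_on by blast
  then have "continuous_on UNIV
      (\<lambda>u. ((norm (A u + u))\<^sup>2 - (norm (A u))\<^sup>2 - (norm u)\<^sup>2) / 2)"
    by (intro continuous_intros) auto
  then show ?thesis
    by (simp add: Re_cinner_polarization)
qed

text \<open>Taking \<open>\<lambda> = t c\<close> with \<open>c = <A a, b>\<close> and \<open>t = -1/(\<parallel>b\<parallel>_A\<^sup>2 + 1)\<close> changes
\<open>\<parallel>a\<parallel>_A\<^sup>2\<close> by \<open>t (2 + t \<parallel>b\<parallel>_A\<^sup>2) |c|\<^sup>2\<close>, where \<open>t (2 + t \<parallel>b\<parallel>_A\<^sup>2) < 0\<close>.\<close>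

lemma positive_op_cinner_eq_0_if_minimal:
  assumes A: "positive_op A"
    and min: "\<And>l. Re (cinner (A a) a) \<le> Re (cinner (A (a + scaleC l b)) (a + scaleC l b))"
  shows "cinner (A a) b = 0"
proof -
  define c where "c = cinner (A a) b"
  define q where "q = Re (cinner (A b) b)"
  define t where "t = - 1 / (q + 1)"
  have "q \<ge> 0"
    unfolding q_def using A by (rule positive_op_Re_cinner_nonneg)
  then have "t < 0" and "t * q > -1"
    by (simp_all add: t_def)
  then have neg: "t * (2 + t * q) < 0"
    by (simp add: mult_neg_pos)
  have scA: "A (scaleC l u) = scaleC l (A u)" for l u
    using A by (simp add: positive_op_def bounded_clinear_scaleC)
  have "Re (cinner (A (a + scaleC (t * c) b)) (a + scaleC (t * c) b))
      = Re (cinner (A a) a) + t * (2 + t * q) * ((Re c)\<^sup>2 + (Im c)\<^sup>2)"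
    unfolding positive_op_cinner_add[OF A]
    by (simp add: scA cinner_scaleC_left cinner_scaleC_right c_def q_def
        power2_eq_square algebra_simps)
  with min[of "t * c"] have "0 \<le> t * (2 + t * q) * (cmod c)\<^sup>2"
    by (simp add: cmod_power2)
  with neg have "(cmod c)\<^sup>2 \<le> 0"
    by (smt (verit) mult_neg_pos)
  then show ?thesis
    unfolding c_def by simp
qed

lemma A_idempotent_complement:
  assumes "linear A" "linear T" "A_idempotent A T"
  shows "A_idempotent A (\<lambda>x. x - T x)"
proof -
  have "A (T (T x)) = A (T x)" for x
    using assms(3) unfolding A_idempotent_def by (metis comp_apply)
  then show ?thesis
    unfolding A_idempotent_def
    by (simp add: fun_eq_iff linear_diff[OF assms(1)] linear_diff[OF assms(2)])
qed

lemma A_projection_residual_orthogonal: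
  assumes A: "positive_op A" and T: "bounded_clinear T" and proj: "A_projection A T"
  shows "cinner (A (y - T y)) (T w) = 0"
proof (rule positive_op_cinner_eq_0_if_minimal[OF A])
  fix l
  have "T (y - scaleC l w) \<in> closure (range T)"
    by (meson closure_subset rangeI subsetD)
  with proj have "anorm A (y - T y) \<le> anorm A (y - T (y - scaleC l w))"
    unfolding A_projection_def by simp
  moreover have "y - T (y - scaleC l w) = (y - T y) + scaleC l (T w)"
    by (simp add: linear_diff[OF bounded_clinear_imp_linear[OF T]] bounded_clinear_scaleC[OF T])
  ultimately show "Re (cinner (A (y - T y)) (y - T y))
      \<le> Re (cinner (A (y - T y + scaleC l (T w))) (y - T y + scaleC l (T w)))"
    by (simp add: anorm_def)
qed

lemma A_projection_complement:
  assumes A: "positive_op A" and T: "bounded_clinear T" and proj: "A_projection A T"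
  shows "A_projection A (\<lambda>x. x - T x)"
  unfolding A_projection_def
proof (intro allI ballI)
  fix y s
  assume s: "s \<in> closure (range (\<lambda>x. x - T x))"
  define S where "S = {s. Re (cinner (A (T y)) (T y)) \<le> Re (cinner (A (y - s)) (y - s))}"
  have "closed S"
    unfolding S_def
    by (intro closed_Collect_le continuous_intros continuous_on_compose2[OF
        continuous_on_Re_cinner_self[OF bounded_clinear_imp_bounded_linear
        [OF positive_op_bounded_clinear[OF A]]]]) auto
  moreover have "range (\<lambda>x. x - T x) \<subseteq> S"
  proof
    fix s
    assume "s \<in> range (\<lambda>x. x - T x)"
    then obtain z where z: "s = z - T z"
      by blast
    define v where "v = (y - z) - T (y - z)"
    have "y - s = T y + v"
      by (simp add: z v_def linear_diff[OF bounded_clinear_imp_linear[OF T]])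
    moreover have "cinner (A (T y)) v = 0"
      using A_projection_residual_orthogonal[OF A T proj, of "y - z" y]
        positive_op_cinner_commute[OF A, of "T y" v]
      unfolding v_def by simp
    ultimately have "Re (cinner (A (y - s)) (y - s))
        = Re (cinner (A (T y)) (T y)) + Re (cinner (A v) v)"
      by (simp add: positive_op_cinner_add[OF A])
    then show "s \<in> S"
      unfolding S_def using positive_op_Re_cinner_nonneg[OF A, of v] by simp
  qed
  ultimately have "s \<in> S"
    using s closure_minimal by blast
  then show "anorm A (y - (y - T y)) \<le> anorm A (y - s)"
    by (simp add: S_def anorm_def)
qed

theorem mainTheorem2:
  fixes A T :: "'a::complex_hilbert \<Rightarrow> 'a"
  assumes separable: "\<exists>D::'a set. countable D \<and> closure D = UNIV"
    and A_pos: "positive_op A"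
    and T_bdd: "bounded_clinear T"
  shows "(A_idempotent A T \<longrightarrow> A_idempotent A (\<lambda>x. x - T x)) \<and>
         (A_projection A T \<longrightarrow> A_projection A (\<lambda>x. x - T x))"
  using A_idempotent_complement[OF
      bounded_clinear_imp_linear[OF positive_op_bounded_clinear[OF A_pos]]
      bounded_clinear_imp_linear[OF T_bdd]]
    A_projection_complement[OF A_pos T_bdd]
  by blast

end
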